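(* Fix $K>0$, $t>0$, $\rho,\kappa_0,\theta\in\mathbb R$, and let $h(x)=\max\{e^x-K,0\}$. For $\tau>0$ and a function $f(x,\sigma)$ set $(e^{\tau L_0}f)(x,\sigma)=\int_{\mathbb R}\phi_\tau(x-y,\sigma)f(y,\sigma)\,dy$, where $$\phi_\tau(x,\sigma)=\frac{1}{\sigma\sqrt{2\pi\tau}}\exp\Big(-\tfrac12\Big(\tfrac{x}{\sigma\sqrt\tau}-\tfrac{\sigma\sqrt\tau}{2}\Big)^2\Big),$$ and $e^{0L_0}=\mathrm{id}$. With $L_1=\rho\sigma^2\partial_x\partial_\sigma+\kappa_0(\theta-\sigma)\partial_\sigma$ and $L_2=\frac12\sigma^2\partial_\sigma^2$, define $$F_1=\int_0^t e^{(t-\tau)L_0}L_1e^{\tau L_0}h\,d\tau,$$ $$F_2=\int_0^t e^{(t-\tau_1)L_0}L_2e^{\tau_1L_0}h\,d\tau_1+\int_0^t\!\!\int_0^{\tau_1}e^{(t-\tau_1)L_0}L_1e^{(\tau_1-\tau_2)L_0}L_1e^{\tau_2L_0}h\,d\tau_2\,d\tau_1,$$ as functions of $(x,\sigma)\in\mathbb R\times(0,\infty)$. Let $d_-=\frac{x-\ln K}{\sigma\sqrt t}-\frac{\sigma\sqrt t}{2}$, $N'(z)=(2\pi)^{-1/2}e^{-z^2/2}$, and let $H_n$ be the probabilists' Hermite polynomials $H_n(z)=(-1)^ne^{z^2/2}\partial_z^ne^{-z^2/2}$. Then $$F_1=\frac{Kt}{2}\big(\kappa_0(\theta-\sigma)\sqrt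 t-\rho\sigma d_-\big)N'(d_-),$$ and $$F_2=K\sum_{i=0}^4 a_{2i}\Big(-\frac{1}{\sigma\sqrt t}\Big)^iH_i(d_-)\,\frac{N'(d_-)}{\sigma\sqrt t},$$ where $a_{20}=\frac{t^2\sigma^2}{4}+\frac{t^3\kappa_0^2}{6}(\theta-\sigma)(\theta-2\sigma)$, $a_{21}=-\frac{t^3\sigma^4}{6}+\frac{t^3\kappa_0\rho\sigma^2}{6}(4\theta-5\sigma)-\frac{t^4\kappa_0^2\sigma^2}{8}(\theta-\sigma)^2$, $a_{22}=\frac{t^3\sigma^4}{6}+\frac{t^3\rho^2\sigma^4}{2}+\frac{t^4\kappa_0^2\sigma^2}{8}(\theta-\sigma)^2-\frac{t^4\kappa_0\rho\sigma^4}{4}(\theta-\sigma)$, $a_{23}=\frac{t^4\kappa_0\rho\sigma^4}{4}(\theta-\sigma)-\frac{t^4\rho^2\sigma^6}{8}$, $a_{24}=\frac{t^4\rho^2\sigma^6}{8}$.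
   Context: These are the coefficients of $\nu$ and $\nu^2$ in the Duhamel–Dyson expansion of the solution of the $\lambda$SABR equation $\partial_t u=\sigma^2[\frac12(\partial_x^2u-\partial_xu)+\nu\rho\partial_x\partial_\sigma u+\frac12\nu^2\partial_\sigma^2u]+\nu\kappa_0(\theta-\sigma)\partial_\sigma u$, $u(0)=h$, whose generator is $L_0+\nu L_1+\nu^2L_2$ with $L_0=\frac12\sigma^2(\partial_x^2-\partial_x)$; the operator $e^{\tau L_0}$ is the heat semigroup of $L_0$ (convolution in $x$ with $\sigma$ as parameter). *)

theory Defs
  imports "HOL-Analysis.Analysis"
begin

text \<open>Functions of (x, sigma) are represented as curried maps real => real => real.\<close>

definition call_payoff :: "real \<Rightarrow> real \<Rightarrow> real \<Rightarrow> real" where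
  "call_payoff K x \<sigma> = max (exp x - K) 0"

definition heat_kernel :: "real \<Rightarrow> real \<Rightarrow> real \<Rightarrow> real" where
  "heat_kernel \<tau> x \<sigma> =
     1 / (\<sigma> * sqrt (2 * pi * \<tau>)) *
     exp (- (1/2) * (x / (\<sigma> * sqrt \<tau>) - \<sigma> * sqrt \<tau> / 2)^2)"

definition heat_sg :: "real \<Rightarrow> (real \<Rightarrow> real \<Rightarrow> real) \<Rightarrow> real \<Rightarrow> real \<Rightarrow> real" where
  "heat_sg \<tau> f x \<sigma> =
     (if \<tau> = 0 then f x \<sigma>
      else (\<integral>y. heat_kernel \<tau> (x - y) \<sigma> * f y \<sigma> \<partial>lborel))"

definition d_x :: "(real \<Rightarrow> real \<Rightarrow> real) \<Rightarrow> real \<Rightarrow> real \<Rightarrow> real" where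
  "d_x f x \<sigma> = deriv (\<lambda>x'. f x' \<sigma>) x"

definition d_sig :: "(real \<Rightarrow> real \<Rightarrow> real) \<Rightarrow> real \<Rightarrow> real \<Rightarrow> real" where
  "d_sig f x \<sigma> = deriv (\<lambda>s. f x s) \<sigma>"

definition L1_op :: "real \<Rightarrow> real \<Rightarrow> real \<Rightarrow> (real \<Rightarrow> real \<Rightarrow> real) \<Rightarrow> real \<Rightarrow> real \<Rightarrow> real" where
  "L1_op \<rho> \<kappa>0 \<theta> f x \<sigma> =
     \<rho> * \<sigma>^2 * d_x (d_sig f) x \<sigma> + \<kappa>0 * (\<theta> - \<sigma>) * d_sig f x \<sigma>"

definition L2_op :: "(real \<Rightarrow> real \<Rightarrow> real) \<Rightarrow> real \<Rightarrow> real \<Rightarrow> real" where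
  "L2_op f x \<sigma> = 1/2 * \<sigma>^2 * d_sig (d_sig f) x \<sigma>"

definition F1 :: "real \<Rightarrow> real \<Rightarrow> real \<Rightarrow> real \<Rightarrow> real \<Rightarrow> real \<Rightarrow> real \<Rightarrow> real" where
  "F1 K t \<rho> \<kappa>0 \<theta> x \<sigma> =
     integral {0..t} (\<lambda>\<tau>. heat_sg (t - \<tau>) (L1_op \<rho> \<kappa>0 \<theta> (heat_sg \<tau> (call_payoff K))) x \<sigma>)"

definition F2 :: "real \<Rightarrow> real \<Rightarrow> real \<Rightarrow> real \<Rightarrow> real \<Rightarrow> real \<Rightarrow> real \<Rightarrow> real" where
  "F2 K t \<rho> \<kappa>0 \<theta> x \<sigma> =
     integral {0..t} (\<lambda>\<tau>1. heat_sg (t - \<tau>1) (L2_op (heat_sg \<tau>1 (call_payoff K))) x \<sigma>)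
   + integral {0..t} (\<lambda>\<tau>1. integral {0..\<tau>1} (\<lambda>\<tau>2.
        heat_sg (t - \<tau>1)
          (L1_op \<rho> \<kappa>0 \<theta> (heat_sg (\<tau>1 - \<tau>2)
             (L1_op \<rho> \<kappa>0 \<theta> (heat_sg \<tau>2 (call_payoff K))))) x \<sigma>))"

definition Nprime :: "real \<Rightarrow> real" where
  "Nprime z = exp (- (z^2) / 2) / sqrt (2 * pi)"

definition hermite :: "nat \<Rightarrow> real \<Rightarrow> real" where
  "hermite n z = (-1)^n * exp (z^2 / 2) * ((deriv ^^ n) (\<lambda>u. exp (- (u^2) / 2)) z)"

definition d_minus :: "real \<Rightarrow> real \<Rightarrow> real \<Rightarrow> real \<Rightarrow> real" where
  "d_minus K t x \<sigma> = (x - ln K) / (\<sigma> * sqrt t) - \<sigma> * sqrt t / 2"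

definition a2 :: "real \<Rightarrow> real \<Rightarrow> real \<Rightarrow> real \<Rightarrow> real \<Rightarrow> nat \<Rightarrow> real" where
  "a2 t \<rho> \<kappa>0 \<theta> \<sigma> i =
    (if i = 0 then t^2 * \<sigma>^2 / 4 + t^3 * \<kappa>0^2 / 6 * (\<theta> - \<sigma>) * (\<theta> - 2 * \<sigma>)
     else if i = 1 then - (t^3 * \<sigma>^4 / 6) + t^3 * \<kappa>0 * \<rho> * \<sigma>^2 / 6 * (4 * \<theta> - 5 * \<sigma>)
                        - t^4 * \<kappa>0^2 * \<sigma>^2 / 8 * (\<theta> - \<sigma>)^2
     else if i = 2 then t^3 * \<sigma>^4 / 6 + t^3 * \<rho>^2 * \<sigma>^4 / 2 + t^4 * \<kappa>0^2 * \<sigma>^2 / 8 * (\<theta> - \<sigma>)^2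
                        - t^4 * \<kappa>0 * \<rho> * \<sigma>^4 / 4 * (\<theta> - \<sigma>)
     else if i = 3 then t^4 * \<kappa>0 * \<rho> * \<sigma>^4 / 4 * (\<theta> - \<sigma>) - t^4 * \<rho>^2 * \<sigma>^6 / 8
     else if i = 4 then t^4 * \<rho>^2 * \<sigma>^6 / 8
     else 0)"

end

theory Submission
  imports Defs "HOL-Probability.Distributions"
begin

text \<open>The semigroup applied to the payoff is the Black--Scholes price, whose \<open>\<sigma>\<close>-derivative is
  the vega \<open>\<sigma> \<tau> K \<phi>\<^sub>\<tau>(x - ln K)\<close>. The \<open>x\<close>-derivatives of the heat kernel,
  \<open>\<psi>\<^sub>k = (-1/(\<sigma>\<surd>\<tau>))\<^sup>k He\<^sub>k(d) N'(d) / (\<sigma>\<surd>\<tau>)\<close>, satisfy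
  \<open>\<partial>\<^sub>x \<psi>\<^sub>k = \<psi>\<^sub>k\<^sub>+\<^sub>1\<close> and, by the three-term recurrence of \<open>He\<^sub>k\<close>,
  \<open>\<partial>\<^sub>\<sigma> \<psi>\<^sub>k = \<sigma>\<tau> (\<psi>\<^sub>k\<^sub>+\<^sub>2 - \<psi>\<^sub>k\<^sub>+\<^sub>1)\<close>; moreover the semigroup at time \<open>u\<close> maps
  \<open>\<psi>\<^sub>k\<close> at time \<open>\<tau>\<close> to \<open>\<psi>\<^sub>k\<close> at time \<open>u + \<tau>\<close>, a Gaussian convolution that reduces to averaging Hermite
  polynomials over a rotated standard normal variable. Hence every integrand in \<open>F\<^sub>1\<close> and \<open>F\<^sub>2\<close>
  is a combination of \<open>\<psi>\<^sub>0, \<dots>, \<psi>\<^sub>4\<close> at time \<open>t\<close> with coefficients polynomial in the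
  time variables, and the time integrals are elementary.\<close>

section \<open>The Gaussian density\<close>

lemma Nprime_eq_std_normal_density: "Nprime z = std_normal_density z"
  by (simp add: Nprime_def std_normal_density_def)

lemma integrable_Nprime: "integrable lborel Nprime"
  unfolding Nprime_eq_std_normal_density[abs_def] by simp

lemma continuous_on_Nprime: "continuous_on A Nprime"
  unfolding Nprime_def by (intro continuous_intros) auto

lemma Nprime_minus [simp]: "Nprime (- z) = Nprime z"
  by (simp add: Nprime_def)

lemma Nprime_has_real_derivative [derivative_intros]:
  "(f has_real_derivative f') (at x within S) \<Longrightarrow>
   ((\<lambda>x. Nprime (f x)) has_real_derivative (- f x * Nprime (f x) * f')) (at x within S)"
  unfolding Nprime_def
  by (auto intro!: derivative_eq_intros simp: power2_eq_square field_simps)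

lemma Nprime_mult_Nprime_rotation:
  assumes "\<alpha>^2 + \<beta>^2 = 1"
  shows "Nprime (\<beta> * d - \<alpha> * z) * Nprime (\<alpha> * d + \<beta> * z) = Nprime d * Nprime z"
proof -
  have "(\<beta> * d - \<alpha> * z)^2 + (\<alpha> * d + \<beta> * z)^2 = (\<alpha>^2 + \<beta>^2) * (d^2 + z^2)"
    by (simp add: power2_eq_square algebra_simps)
  then have "(\<beta> * d - \<alpha> * z)^2 + (\<alpha> * d + \<beta> * z)^2 = d^2 + z^2"
    using assms by simp
  then have "exp (- ((\<beta> * d - \<alpha> * z)^2) / 2) * exp (- ((\<alpha> * d + \<beta> * z)^2) / 2)
             = exp (- (d^2) / 2) * exp (- (z^2) / 2)"
    unfolding mult_exp_exp by (simp add: field_simps)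
  then show ?thesis unfolding Nprime_def by simp
qed

definition gauss_tail :: "real \<Rightarrow> real" where
  "gauss_tail w = (LBINT z=ereal w..\<infinity>. Nprime z)"

lemma gauss_tail_eq_integral: "gauss_tail w = (\<integral>z. indicator {w<..} z * Nprime z \<partial>lborel)"
  unfolding gauss_tail_def interval_lebesgue_integral_def set_lebesgue_integral_def by simp

lemma gauss_tail_has_real_derivative: "(gauss_tail has_real_derivative - Nprime w) (at w)"
proof -
  have integrable: "interval_lebesgue_integrable lborel a b Nprime" for a b
    unfolding interval_lebesgue_integrable_def set_integrable_def
    using integrable_mult_indicator[OF _ integrable_Nprime] by (auto simp: borel_open)
  have split: "gauss_tail w = gauss_tail 0 - (LBINT z=ereal 0..ereal w. Nprime z)" for w
    unfolding gauss_tail_def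
    using interval_integral_sum[OF integrable, of "ereal w" "ereal 0" \<infinity>]
      interval_integral_endpoints_reverse[of "ereal w" "ereal 0" Nprime]
    by linarith
  define a where "a = min w 0 - 1"
  define b where "b = max w 0 + 1"
  have "((\<lambda>u. LBINT z=ereal 0..ereal u. Nprime z) has_vector_derivative Nprime w) (at w within {a..b})"
    by (rule interval_integral_FTC2) (auto simp: a_def b_def continuous_on_Nprime)
  moreover have "at w within {a..b} = at w"
    by (rule at_within_Icc_at) (auto simp: a_def b_def)
  ultimately have "((\<lambda>w. gauss_tail 0 - (LBINT z=ereal 0..ereal w. Nprime z))
                      has_real_derivative 0 - Nprime w) (at w)"
    by (intro derivative_intros) (simp add: has_real_derivative_iff_has_vector_derivative)
  then show ?thesis by (subst split[abs_def]) simp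
qed

lemma gauss_tail_has_real_derivative_chain [derivative_intros]:
  "(f has_real_derivative f') (at x within S) \<Longrightarrow>
   ((\<lambda>x. gauss_tail (f x)) has_real_derivative (- Nprime (f x) * f')) (at x within S)"
  by (rule DERIV_chain2[OF gauss_tail_has_real_derivative])

section \<open>Hermite polynomials\<close>

fun hermite_poly :: "nat \<Rightarrow> real \<Rightarrow> real" where
  "hermite_poly 0 z = 1"
| "hermite_poly (Suc 0) z = z"
| "hermite_poly (Suc (Suc n)) z = z * hermite_poly (Suc n) z - real (Suc n) * hermite_poly n z"

lemma hermite_poly_Suc:
  "hermite_poly (Suc n) z = z * hermite_poly n z - real n * hermite_poly (n - 1) z"
  by (cases n) simp_all

lemma hermite_poly_small:
  "hermite_poly 2 z = z^2 - 1"
  "hermite_poly 3 z = z^3 - 3 * z"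
  "hermite_poly 4 z = z^4 - 6 * z^2 + 3"
  by (simp_all add: numeral_eq_Suc power2_eq_square power3_eq_cube power4_eq_xxxx algebra_simps)

lemma hermite_poly_has_real_derivative:
  "(hermite_poly n has_real_derivative real n * hermite_poly (n - 1) z) (at z)"
proof (induction n z rule: hermite_poly.induct)
  case (3 n z)
  have "hermite_poly (Suc (Suc n)) = (\<lambda>z. z * hermite_poly (Suc n) z - real (Suc n) * hermite_poly n z)"
    by (rule ext) simp
  moreover have "((\<lambda>z. z * hermite_poly (Suc n) z - real (Suc n) * hermite_poly n z) has_real_derivative
      1 * hermite_poly (Suc n) z + real (Suc n) * hermite_poly n z * z
      - real (Suc n) * (real n * hermite_poly (n - 1) z)) (at z)"
    by (intro DERIV_diff DERIV_mult DERIV_cmult DERIV_ident) (use "3.IH" in simp_all)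
  ultimately show ?case
    by (simp add: hermite_poly_Suc[of n] algebra_simps del: hermite_poly.simps)
qed (auto intro!: derivative_eq_intros)

definition hermite_gauss :: "nat \<Rightarrow> real \<Rightarrow> real" where
  "hermite_gauss k d = hermite_poly k d * Nprime d"

lemma hermite_gauss_has_real_derivative [derivative_intros]:
  assumes "(f has_real_derivative f') (at x within S)"
  shows "((\<lambda>x. hermite_gauss k (f x)) has_real_derivative - hermite_gauss (Suc k) (f x) * f') (at x within S)"
proof -
  have "(hermite_gauss k has_real_derivative - hermite_gauss (Suc k) z) (at z)" for z
    unfolding hermite_gauss_def[abs_def]
    by (rule DERIV_cong[OF DERIV_mult[OF hermite_poly_has_real_derivative
          Nprime_has_real_derivative[OF DERIV_ident]]])
       (simp add: hermite_poly_Suc[of k] algebra_simps del: hermite_poly.simps)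
  from DERIV_chain2[OF this assms] show ?thesis .
qed

lemma hermite_gauss_Suc_Suc:
  "hermite_gauss (Suc (Suc k)) d = d * hermite_gauss (Suc k) d - real (Suc k) * hermite_gauss k d"
  by (simp add: hermite_gauss_def algebra_simps del: of_nat_Suc)

lemma hermite_eq_hermite_poly: "hermite n z = hermite_poly n z"
proof -
  have gauss: "(-1)^k * hermite_poly k u * exp (- (u^2) / 2) = (-1)^k * sqrt (2 * pi) * hermite_gauss k u"
    for k u by (simp add: hermite_gauss_def Nprime_def)
  have "(deriv ^^ n) (\<lambda>u. exp (- (u^2) / 2)) = (\<lambda>u. (-1)^n * hermite_poly n u * exp (- (u^2) / 2))"
  proof (induction n)
    case (Suc n)
    have "((\<lambda>u. (-1)^n * sqrt (2 * pi) * hermite_gauss n u) has_real_derivative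
            (-1)^Suc n * sqrt (2 * pi) * hermite_gauss (Suc n) u) (at u)" for u
      by (rule DERIV_cong[OF DERIV_cmult[OF hermite_gauss_has_real_derivative[OF DERIV_ident]]]) simp
    then have "deriv (\<lambda>u. (-1)^n * hermite_poly n u * exp (- (u^2) / 2))
               = (\<lambda>u. (-1)^Suc n * hermite_poly (Suc n) u * exp (- (u^2) / 2))"
      unfolding gauss by (intro ext DERIV_imp_deriv)
    with Suc show ?case by simp
  qed simp
  moreover have "exp (z^2 / 2) * exp (- (z^2) / 2) = 1"
    by (simp flip: exp_add)
  ultimately show ?thesis
    unfolding hermite_def by (simp add: algebra_simps flip: power_mult_distrib)
qed

section \<open>The Black--Scholes price\<close>

lemma heat_kernel_eq_Nprime:
  assumes "s > 0" "\<tau> > 0"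
  shows "heat_kernel \<tau> z s = Nprime (z / (s * sqrt \<tau>) - s * sqrt \<tau> / 2) / (s * sqrt \<tau>)"
proof -
  have "sqrt (2 * pi * \<tau>) = sqrt (2 * pi) * sqrt \<tau>"
    by (simp add: real_sqrt_mult)
  then show ?thesis
    unfolding heat_kernel_def Nprime_def using assms by (simp add: field_simps)
qed

lemma heat_sg_call_payoff:
  fixes x K s \<tau> :: real
  assumes K: "K > 0" and s: "s > 0" and \<tau>: "\<tau> > 0"
  defines "q \<equiv> s * sqrt \<tau>"
  defines "dm \<equiv> (x - ln K) / q - q / 2"
  shows "heat_sg \<tau> (call_payoff K) x s = exp x * gauss_tail (- (dm + q)) - K * gauss_tail (- dm)"
proof -
  have q: "q > 0" using s \<tau> by (simp add: q_def)
  define t0 where "t0 = x - q^2 / 2"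
  define A where "A = {- dm<..}"
  have integrand: "q * (heat_kernel \<tau> (x - (t0 + q * z)) s * max (exp (t0 + q * z) - K) 0)
                   = indicator A z * (exp x * Nprime (z - q) - K * Nprime z)" for z
  proof -
    have "(x - (t0 + q * z)) / q - q / 2 = - z"
      using q by (simp add: t0_def field_simps power2_eq_square)
    moreover have "heat_kernel \<tau> (x - (t0 + q * z)) s = Nprime ((x - (t0 + q * z)) / q - q / 2) / q"
      using heat_kernel_eq_Nprime[OF s \<tau>] by (simp add: q_def)
    ultimately have kernel: "q * heat_kernel \<tau> (x - (t0 + q * z)) s = Nprime z"
      using q by simp
    have "exp (- (z^2) / 2) * exp (t0 + q * z) = exp x * exp (- ((z - q)^2) / 2)"
      unfolding mult_exp_exp t0_def by (simp add: power2_eq_square field_simps)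
    then have shift: "Nprime z * exp (t0 + q * z) = exp x * Nprime (z - q)"
      unfolding Nprime_def by (simp add: field_simps)
    have "exp (t0 + q * z) - K > 0 \<longleftrightarrow> ln K < t0 + q * z"
      using K by (metis diff_gt_0_iff_gt exp_less_cancel_iff exp_ln)
    also have "\<dots> \<longleftrightarrow> z \<in> A"
      using q unfolding A_def dm_def t0_def by (simp add: field_simps power2_eq_square)
    finally have positive_part: "exp (t0 + q * z) - K > 0 \<longleftrightarrow> z \<in> A" .
    have "q * (heat_kernel \<tau> (x - (t0 + q * z)) s * max (exp (t0 + q * z) - K) 0)
          = indicator A z * (Nprime z * exp (t0 + q * z) - K * Nprime z)"
      using positive_part by (auto simp: kernel[symmetric] max_def algebra_simps)
    then show ?thesis by (simp add: shift)
  qed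
  have int1: "integrable lborel (\<lambda>z. indicator A z * Nprime (z - q))"
    using integrable_mult_indicator[OF _ lborel_integrable_real_affine[OF integrable_Nprime, of 1 "- q"]]
    by (simp add: A_def)
  have int2: "integrable lborel (\<lambda>z. indicator A z * Nprime z)"
    using integrable_mult_indicator[OF _ integrable_Nprime] by (simp add: A_def)
  have shifted_tail: "(\<integral>z. indicator A z * Nprime (z - q) \<partial>lborel) = gauss_tail (- (dm + q))"
  proof -
    have "(\<integral>z. indicator A z * Nprime (z - q) \<partial>lborel)
          = \<bar>1\<bar> *\<^sub>R (\<integral>z. indicator A (q + 1 * z) * Nprime ((q + 1 * z) - q) \<partial>lborel)"
      by (rule lborel_integral_real_affine) simp
    also have "\<dots> = (\<integral>z. indicator {- (dm + q)<..} z * Nprime z \<partial>lborel)"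
      by (simp, rule Bochner_Integration.integral_cong) (auto simp: A_def indicator_def)
    finally show ?thesis by (simp add: gauss_tail_eq_integral)
  qed
  have "heat_sg \<tau> (call_payoff K) x s = (\<integral>y. heat_kernel \<tau> (x - y) s * max (exp y - K) 0 \<partial>lborel)"
    using \<tau> by (simp add: heat_sg_def call_payoff_def)
  also have "\<dots> = \<bar>q\<bar> *\<^sub>R (\<integral>z. heat_kernel \<tau> (x - (t0 + q * z)) s * max (exp (t0 + q * z) - K) 0 \<partial>lborel)"
    by (rule lborel_integral_real_affine) (use q in simp)
  also have "\<dots> = (\<integral>z. indicator A z * (exp x * Nprime (z - q) - K * Nprime z) \<partial>lborel)"
    using q by (simp add: integrand flip: integral_mult_right_zero)
  also have "\<dots> = exp x * (\<integral>z. indicator A z * Nprime (z - q) \<partial>lborel)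
                  - K * (\<integral>z. indicator A z * Nprime z \<partial>lborel)"
    using int1 int2 by (simp add: algebra_simps)
  also have "\<dots> = exp x * gauss_tail (- (dm + q)) - K * gauss_tail (- dm)"
    unfolding shifted_tail by (simp add: gauss_tail_eq_integral A_def)
  finally show ?thesis .
qed

lemma heat_sg_call_payoff_vega:
  fixes x K s \<tau> :: real
  assumes K: "K > 0" and s: "s > 0" and \<tau>: "\<tau> > 0"
  shows "((\<lambda>s. heat_sg \<tau> (call_payoff K) x s) has_real_derivative
           s * \<tau> * K * heat_kernel \<tau> (x - ln K) s) (at s)"
proof -
  define a where "a = x - ln K"
  define r where "r = sqrt \<tau>"
  have r: "r > 0" "\<tau> = r * r" using \<tau> by (auto simp: r_def)
  define dm where "dm = (\<lambda>s. a / (s * r) - s * r / 2)"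
  define price where "price = (\<lambda>s. exp x * gauss_tail (- (dm s + s * r)) - K * gauss_tail (- dm s))"
  have price: "price s' = heat_sg \<tau> (call_payoff K) x s'" if "s' \<in> {0<..}" for s'
    using heat_sg_call_payoff[OF K _ \<tau>] that by (simp add: price_def dm_def a_def r_def)
  define dm' where "dm' = - a / (s^2 * r) - r / 2"
  have "(price has_real_derivative
          exp x * Nprime (dm s + s * r) * (dm' + r) - K * Nprime (dm s) * dm') (at s)"
    unfolding price_def dm_def dm'_def using s r
    by (auto intro!: derivative_eq_intros simp: power2_eq_square field_simps)
  moreover have "exp x * Nprime (dm s + s * r) = K * Nprime (dm s)"
  proof -
    have "x - ((dm s + s * r)^2) / 2 = ln K - ((dm s)^2) / 2"
      using s r by (simp add: dm_def a_def power2_eq_square field_simps)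
    then have "exp x * exp (- ((dm s + s * r)^2) / 2) = K * exp (- ((dm s)^2) / 2)"
      using K by (metis exp_add exp_ln diff_conv_add_uminus minus_divide_left)
    then show ?thesis unfolding Nprime_def by simp
  qed
  moreover have "heat_kernel \<tau> (x - ln K) s = Nprime (dm s) / (s * r)"
    using heat_kernel_eq_Nprime[OF s \<tau>] by (simp add: dm_def a_def r_def)
  ultimately have "(price has_real_derivative s * \<tau> * K * heat_kernel \<tau> (x - ln K) s) (at s)"
    using s r by (simp add: algebra_simps)
  then show ?thesis
    by (rule has_field_derivative_transform_within_open[of _ _ _ "{0<..}"]) (use s price in auto)
qed

section \<open>Gaussian averages of Hermite polynomials\<close>

lemma has_bochner_integral_Nprime_power:
  assumes "j \<le> 4"
  shows "has_bochner_integral lborel (\<lambda>z. Nprime z * z^j)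
           (if j = 0 \<or> j = 2 then 1 else if j = 4 then 3 else 0)"
proof -
  have even: "has_bochner_integral lborel (\<lambda>z. Nprime z * z^(2*k)) (fact (2 * k) / (2^k * fact k))" for k
    using std_normal_moment_even[of k] by (simp add: Nprime_eq_std_normal_density[abs_def])
  have odd: "has_bochner_integral lborel (\<lambda>z. Nprime z * z^(2*k+1)) 0" for k
    using std_normal_moment_odd[of k] by (simp add: Nprime_eq_std_normal_density[abs_def])
  from assms have "j \<in> {0, 1, 2, 3, 4}" by auto
  then show ?thesis
    using even[of 0] odd[of 0] even[of 1] odd[of 1] even[of 2]
    by (auto simp: numeral_3_eq_3 fact_numeral)
qed

lemma has_bochner_integral_Nprime_quartic:
  assumes "\<And>z. g z = Nprime z * (ca + cb * z + cc * z^2 + cd * z^3 + ce * z^4)"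
    and "v = ca + cc + 3 * ce"
  shows "has_bochner_integral lborel g v"
proof -
  have "has_bochner_integral lborel
          (\<lambda>z. ca * (Nprime z * z^0) + cb * (Nprime z * z^1) + cc * (Nprime z * z^2)
               + cd * (Nprime z * z^3) + ce * (Nprime z * z^4))
          (ca * 1 + cb * 0 + cc * 1 + cd * 0 + ce * 3)"
    by (intro has_bochner_integral_add has_bochner_integral_mult_right)
       (use has_bochner_integral_Nprime_power[of 0] has_bochner_integral_Nprime_power[of 1]
         has_bochner_integral_Nprime_power[of 2] has_bochner_integral_Nprime_power[of 3]
         has_bochner_integral_Nprime_power[of 4] in auto)
  moreover have "(\<lambda>z. ca * (Nprime z * z^0) + cb * (Nprime z * z^1) + cc * (Nprime z * z^2)
                     + cd * (Nprime z * z^3) + ce * (Nprime z * z^4)) = g"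
    by (rule ext) (simp add: assms algebra_simps)
  ultimately show ?thesis using assms(2) by (simp add: mult.commute)
qed

text \<open>The cases \<open>k \<le> 4\<close> of the Hermite addition theorem, checked by expanding the polynomials.\<close>
lemma has_bochner_integral_Nprime_hermite_poly_rotation:
  assumes "k \<le> 4" and \<alpha>\<beta>: "\<alpha>^2 + \<beta>^2 = 1"
  shows "has_bochner_integral lborel (\<lambda>z. Nprime z * hermite_poly k (\<alpha> * d + \<beta> * z))
           (\<alpha>^k * hermite_poly k d)"
proof -
  have \<beta>2: "\<beta>^2 = 1 - \<alpha>^2" using \<alpha>\<beta> by simp
  have \<beta>4: "\<beta>^4 = (1 - \<alpha>^2)^2" by (simp add: \<beta>2[symmetric] flip: power_mult)
  note simps = hermite_poly_small algebra_simps power2_eq_square power3_eq_cube power4_eq_xxxx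
  from assms(1) have "k \<in> {0, 1, 2, 3, 4}" by auto
  then show ?thesis
  proof (elim insertE)
    assume k: "k = 0" show ?thesis unfolding k
      by (intro has_bochner_integral_Nprime_quartic[where ca=1 and cb=0 and cc=0 and cd=0 and ce=0]) auto
  next
    assume k: "k = 1" show ?thesis unfolding k
      by (intro has_bochner_integral_Nprime_quartic[where ca="\<alpha> * d" and cb=\<beta> and cc=0 and cd=0 and ce=0])
         (auto simp: algebra_simps)
  next
    assume k: "k = 2" show ?thesis unfolding k
      by (intro has_bochner_integral_Nprime_quartic[where ca="\<alpha>^2 * d^2 - 1" and cb="2 * \<alpha> * \<beta> * d"
            and cc="\<beta>^2" and cd=0 and ce=0])
         (simp add: simps, simp add: \<beta>2 hermite_poly_small algebra_simps)
  next
    assume k: "k = 3" show ?thesis unfolding k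
      by (intro has_bochner_integral_Nprime_quartic[where ca="\<alpha>^3 * d^3 - 3 * \<alpha> * d"
            and cb="3 * \<alpha>^2 * \<beta> * d^2 - 3 * \<beta>" and cc="3 * \<alpha> * \<beta>^2 * d" and cd="\<beta>^3" and ce=0])
         (simp add: simps, simp only: \<beta>2, simp add: simps)
  next
    assume k: "k = 4" show ?thesis unfolding k
      by (intro has_bochner_integral_Nprime_quartic[where ca="\<alpha>^4 * d^4 - 6 * \<alpha>^2 * d^2 + 3"
            and cb="4 * \<alpha>^3 * \<beta> * d^3 - 12 * \<alpha> * \<beta> * d" and cc="6 * \<alpha>^2 * \<beta>^2 * d^2 - 6 * \<beta>^2"
            and cd="4 * \<alpha> * \<beta>^3 * d" and ce="\<beta>^4"])
         (simp add: simps, simp only: \<beta>2 \<beta>4, simp add: simps)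
  qed simp
qed

section \<open>Derivatives of the heat kernel\<close>

definition heat_kernel_deriv :: "nat \<Rightarrow> real \<Rightarrow> real \<Rightarrow> real \<Rightarrow> real" where
  "heat_kernel_deriv k \<tau> z s =
     (-1 / (s * sqrt \<tau>))^k * hermite_gauss k (z / (s * sqrt \<tau>) - s * sqrt \<tau> / 2) / (s * sqrt \<tau>)"

lemma heat_kernel_deriv_0:
  "s > 0 \<Longrightarrow> \<tau> > 0 \<Longrightarrow> heat_kernel_deriv 0 \<tau> z s = heat_kernel \<tau> z s"
  by (simp add: heat_kernel_deriv_def hermite_gauss_def heat_kernel_eq_Nprime)

lemma heat_kernel_deriv_has_real_derivative [derivative_intros]:
  assumes "(f has_real_derivative f') (at x)"
  shows "((\<lambda>x. heat_kernel_deriv k \<tau> (f x) s) has_real_derivative heat_kernel_deriv (Suc k) \<tau> (f x) s * f') (at x)"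
proof -
  define q where "q = s * sqrt \<tau>"
  have "((\<lambda>x. (-1 / q)^k / q * hermite_gauss k (f x * (1 / q) - q / 2)) has_real_derivative
          (-1 / q)^k / q * (- hermite_gauss (Suc k) (f x * (1 / q) - q / 2) * (f' * (1 / q) - 0))) (at x)"
    by (intro DERIV_cmult hermite_gauss_has_real_derivative DERIV_diff DERIV_cmult_right assms DERIV_const)
  then show ?thesis
    by (simp add: heat_kernel_deriv_def q_def[symmetric] field_simps)
qed

lemma heat_kernel_deriv_has_real_derivative_sigma:
  assumes s: "s > 0" and \<tau>: "\<tau> > 0"
  shows "((\<lambda>s. heat_kernel_deriv k \<tau> z s) has_real_derivative
           s * \<tau> * (heat_kernel_deriv (k + 2) \<tau> z s - heat_kernel_deriv (k + 1) \<tau> z s)) (at s)"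
proof -
  define r where "r = sqrt \<tau>"
  have r: "r > 0" "\<tau> = r * r" using \<tau> by (auto simp: r_def)
  define d where "d = (\<lambda>s. z / (s * r) - s * r / 2)"
  have kernel: "heat_kernel_deriv j \<tau> z s' = (-1)^j * hermite_gauss j (d s') / (s' * r)^Suc j" for j s'
    unfolding heat_kernel_deriv_def power_divide[of "-1"] by (simp add: d_def r_def field_simps)
  have d': "(d has_real_derivative - d s / s - r) (at s)"
    unfolding d_def using s r by (auto intro!: derivative_eq_intros simp: power2_eq_square field_simps)
  have power': "((\<lambda>s. (s * r)^Suc k) has_real_derivative real (Suc k) * (s * r)^k * r) (at s)"
    by (rule DERIV_cong[OF DERIV_power[OF DERIV_cmult_right[OF DERIV_ident]]]) simp
  have "((\<lambda>s. (-1)^k * hermite_gauss k (d s) / (s * r)^Suc k) has_real_derivative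
          ((-1)^k * (- hermite_gauss (Suc k) (d s) * (- d s / s - r)) * (s * r)^Suc k
           - (-1)^k * hermite_gauss k (d s) * (real (Suc k) * (s * r)^k * r)) / ((s * r)^Suc k * (s * r)^Suc k)) (at s)"
    using s r by (intro DERIV_divide DERIV_cmult hermite_gauss_has_real_derivative d' power') simp
  then show ?thesis
    unfolding kernel
  proof (rule DERIV_cong)
    have "k + 2 = Suc (Suc k)" "k + 1 = Suc k" by simp_all
    then show "((-1)^k * (- hermite_gauss (Suc k) (d s) * (- d s / s - r)) * (s * r)^Suc k
           - (-1)^k * hermite_gauss k (d s) * (real (Suc k) * (s * r)^k * r)) / ((s * r)^Suc k * (s * r)^Suc k)
      = s * \<tau> * ((-1)^(k + 2) * hermite_gauss (k + 2) (d s) / (s * r)^Suc (k + 2)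
                   - (-1)^(k + 1) * hermite_gauss (k + 1) (d s) / (s * r)^Suc (k + 1))"
      using s r by (simp only: hermite_gauss_Suc_Suc) (simp add: field_simps)
  qed
qed

text \<open>Substituting \<open>y = t\<^sub>0 + c z\<close> splits the Gaussian product in the integrand into a standard
  normal density in \<open>z\<close> times \<open>Nprime d\<close>, by a rotation with \<open>\<alpha> = q/r\<close> and \<open>\<beta> = p/r\<close>, where
  \<open>p\<^sup>2 = \<sigma>\<^sup>2u\<close>, \<open>q\<^sup>2 = \<sigma>\<^sup>2\<tau>\<close> and \<open>r\<^sup>2 = p\<^sup>2 + q\<^sup>2\<close>.\<close>
lemma heat_kernel_convolution:
  fixes u \<tau> \<sigma> x a :: real
  assumes k: "k \<le> 4" and u: "u > 0" and \<tau>: "\<tau> > 0" and \<sigma>: "\<sigma> > 0"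
  shows "has_bochner_integral lborel (\<lambda>y. heat_kernel u (x - y) \<sigma> * heat_kernel_deriv k \<tau> (y - a) \<sigma>)
           (heat_kernel_deriv k (u + \<tau>) (x - a) \<sigma>)"
proof -
  define p where "p = \<sigma> * sqrt u"
  define q where "q = \<sigma> * sqrt \<tau>"
  define r where "r = \<sigma> * sqrt (u + \<tau>)"
  have pos: "p > 0" "q > 0" "r > 0"
    using u \<tau> \<sigma> by (auto simp: p_def q_def r_def)
  have pythagoras: "r * r = p * p + q * q"
    using u \<tau> \<sigma> by (simp add: p_def q_def r_def algebra_simps)
  define d where "d = (x - a) / r - r / 2"
  define \<alpha> where "\<alpha> = q / r"
  define \<beta> where "\<beta> = p / r"
  have "\<alpha>^2 + \<beta>^2 = (q * q + p * p) / (r * r)"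
    by (simp add: \<alpha>_def \<beta>_def power2_eq_square add_divide_distrib)
  then have \<alpha>\<beta>: "\<alpha>^2 + \<beta>^2 = 1"
    using pythagoras pos by simp
  define c where "c = q * p / r"
  have c: "c > 0" using pos by (simp add: c_def)
  define t0 where "t0 = a + q * \<alpha> * d + q^2 / 2"
  define M where "M = (-1 / q)^k * Nprime d / (p * q)"
  have integrand: "heat_kernel u (x - (t0 + c * z)) \<sigma> * heat_kernel_deriv k \<tau> (t0 + c * z - a) \<sigma>
                   = M * (Nprime z * hermite_poly k (\<alpha> * d + \<beta> * z))" for z
  proof -
    have "(x - (t0 + c * z)) / p - p / 2 = \<beta> * d - \<alpha> * z"
    proof -
      have "x - (t0 + c * z) - p * p / 2 = p * (\<beta> * d - \<alpha> * z)"
        using pos unfolding t0_def c_def d_def \<alpha>_def \<beta>_def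
        by (simp add: field_simps) (use pythagoras in algebra)
      then show ?thesis using pos by (simp add: field_simps)
    qed
    then have h1: "heat_kernel u (x - (t0 + c * z)) \<sigma> = Nprime (\<beta> * d - \<alpha> * z) / p"
      using heat_kernel_eq_Nprime[OF \<sigma> u, of "x - (t0 + c * z)"] by (simp add: p_def)
    have "(t0 + c * z - a) / q - q / 2 = \<alpha> * d + \<beta> * z"
      using pos by (simp add: t0_def c_def \<alpha>_def \<beta>_def field_simps power2_eq_square)
    then have h2: "heat_kernel_deriv k \<tau> (t0 + c * z - a) \<sigma>
                   = (-1 / q)^k * (hermite_poly k (\<alpha> * d + \<beta> * z) * Nprime (\<alpha> * d + \<beta> * z)) / q"
      by (simp add: heat_kernel_deriv_def hermite_gauss_def q_def)
    show ?thesis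
      unfolding h1 h2 M_def using Nprime_mult_Nprime_rotation[OF \<alpha>\<beta>, of d z] pos
      by (simp add: field_simps)
  qed
  have "has_bochner_integral lborel
          (\<lambda>z. heat_kernel u (x - (t0 + c * z)) \<sigma> * heat_kernel_deriv k \<tau> (t0 + c * z - a) \<sigma>)
          (M * (\<alpha>^k * hermite_poly k d))"
    unfolding integrand
    by (rule has_bochner_integral_mult_right[OF has_bochner_integral_Nprime_hermite_poly_rotation[OF k \<alpha>\<beta>]])
  moreover have "M * (\<alpha>^k * hermite_poly k d) = heat_kernel_deriv k (u + \<tau>) (x - a) \<sigma> /\<^sub>R \<bar>c\<bar>"
  proof -
    have "(-1 / q)^k * \<alpha>^k = (-1 / r)^k"
      using pos by (simp add: \<alpha>_def power_mult_distrib[symmetric])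
    moreover have "heat_kernel_deriv k (u + \<tau>) (x - a) \<sigma>
                   = (-1 / r)^k * (hermite_poly k d * Nprime d) / r"
      by (simp add: heat_kernel_deriv_def hermite_gauss_def r_def d_def)
    ultimately show ?thesis
      unfolding M_def using c pos by (simp add: c_def field_simps)
  qed
  ultimately show ?thesis
    by (subst lborel_has_bochner_integral_real_affine_iff[where c=c and t=t0]) (use c in auto)
qed

definition heat_kernel_comb ::
    "real \<Rightarrow> real \<Rightarrow> real \<Rightarrow> real \<Rightarrow> real \<Rightarrow> real \<Rightarrow> real \<Rightarrow> real \<Rightarrow> real" where
  "heat_kernel_comb c0 c1 c2 c3 c4 \<tau> z s =
     c0 * heat_kernel_deriv 0 \<tau> z s + c1 * heat_kernel_deriv 1 \<tau> z s + c2 * heat_kernel_deriv 2 \<tau> z s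
     + c3 * heat_kernel_deriv 3 \<tau> z s + c4 * heat_kernel_deriv 4 \<tau> z s"

lemma heat_sg_heat_kernel_comb:
  assumes u: "u > 0" and \<tau>: "\<tau> > 0" and \<sigma>: "\<sigma> > 0"
    and f: "\<And>y. f y \<sigma> = heat_kernel_comb c0 c1 c2 c3 c4 \<tau> (y - a) \<sigma>"
  shows "heat_sg u f x \<sigma> = heat_kernel_comb c0 c1 c2 c3 c4 (u + \<tau>) (x - a) \<sigma>"
proof -
  have summand: "has_bochner_integral lborel (\<lambda>y. c * heat_kernel_deriv k \<tau> (y - a) \<sigma> * heat_kernel u (x - y) \<sigma>)
                (c * heat_kernel_deriv k (u + \<tau>) (x - a) \<sigma>)" if "k \<le> 4" for c k
    using has_bochner_integral_mult_right[OF heat_kernel_convolution[OF that u \<tau> \<sigma>], of c]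
    by (simp add: ac_simps)
  have "has_bochner_integral lborel (\<lambda>y. heat_kernel u (x - y) \<sigma> * heat_kernel_comb c0 c1 c2 c3 c4 \<tau> (y - a) \<sigma>)
          (heat_kernel_comb c0 c1 c2 c3 c4 (u + \<tau>) (x - a) \<sigma>)"
    unfolding heat_kernel_comb_def distrib_left distrib_right mult.commute[of "heat_kernel u (x - _) \<sigma>"]
    by (intro has_bochner_integral_add summand) auto
  then show ?thesis
    using u unfolding heat_sg_def f by (simp add: has_bochner_integral_integral_eq)
qed

lemma d_x_heat_kernel_comb:
  assumes "\<And>y. h y \<sigma> = heat_kernel_comb c0 c1 c2 c3 0 \<tau> (y - a) \<sigma>"
  shows "d_x h y \<sigma> = heat_kernel_comb 0 c0 c1 c2 c3 \<tau> (y - a) \<sigma>"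
proof -
  have "((\<lambda>y. heat_kernel_comb c0 c1 c2 c3 0 \<tau> (y - a) \<sigma>) has_real_derivative
          heat_kernel_comb 0 c0 c1 c2 c3 \<tau> (y - a) \<sigma>) (at y)"
    unfolding heat_kernel_comb_def
    by (auto intro!: derivative_eq_intros simp: numeral_eq_Suc)
  then show ?thesis
    unfolding d_x_def assms by (rule DERIV_imp_deriv)
qed

lemma d_sig_heat_kernel_comb:
  assumes \<tau>: "\<tau> > 0" and \<sigma>: "\<sigma> > 0"
    and g: "\<And>s. s > 0 \<Longrightarrow> g y s = fa s * heat_kernel_deriv 0 \<tau> (y - a) s + fb s * heat_kernel_deriv 1 \<tau> (y - a) s"
    and fa: "(fa has_real_derivative fa') (at \<sigma>)" and fb: "(fb has_real_derivative fb') (at \<sigma>)"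
  shows "d_sig g y \<sigma> = heat_kernel_comb fa' (fb' - fa \<sigma> * \<sigma> * \<tau>) ((fa \<sigma> - fb \<sigma>) * \<sigma> * \<tau>) (fb \<sigma> * \<sigma> * \<tau>) 0
                          \<tau> (y - a) \<sigma>"
proof -
  have "((\<lambda>s. fa s * heat_kernel_deriv 0 \<tau> (y - a) s + fb s * heat_kernel_deriv 1 \<tau> (y - a) s)
         has_real_derivative
          heat_kernel_comb fa' (fb' - fa \<sigma> * \<sigma> * \<tau>) ((fa \<sigma> - fb \<sigma>) * \<sigma> * \<tau>) (fb \<sigma> * \<sigma> * \<tau>) 0
            \<tau> (y - a) \<sigma>) (at \<sigma>)"
    unfolding heat_kernel_comb_def
    by (auto intro!: derivative_eq_intros fa fb heat_kernel_deriv_has_real_derivative_sigma[OF \<sigma> \<tau>]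
        simp: algebra_simps numeral_eq_Suc)
  then have "((\<lambda>s. g y s) has_real_derivative
          heat_kernel_comb fa' (fb' - fa \<sigma> * \<sigma> * \<tau>) ((fa \<sigma> - fb \<sigma>) * \<sigma> * \<tau>) (fb \<sigma> * \<sigma> * \<tau>) 0
            \<tau> (y - a) \<sigma>) (at \<sigma>)"
    by (rule has_field_derivative_transform_within_open[of _ _ _ "{0<..}"]) (use \<sigma> g in auto)
  then show ?thesis
    unfolding d_sig_def by (rule DERIV_imp_deriv)
qed

lemma d_sig_heat_sg_call_payoff:
  assumes "K > 0" "\<tau> > 0" "s > 0"
  shows "d_sig (heat_sg \<tau> (call_payoff K)) y s = s * \<tau> * K * heat_kernel_deriv 0 \<tau> (y - ln K) s"
  unfolding d_sig_def heat_kernel_deriv_0[OF assms(3,2)]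
  by (rule DERIV_imp_deriv[OF heat_sg_call_payoff_vega]) (use assms in auto)

lemma L1_op_heat_sg_call_payoff:
  assumes K: "K > 0" and \<tau>: "\<tau> > 0" and s: "s > 0"
  shows "L1_op \<rho> \<kappa> \<theta> (heat_sg \<tau> (call_payoff K)) y s =
           heat_kernel_comb (\<kappa> * (\<theta> - s) * s * \<tau> * K) (\<rho> * s^3 * \<tau> * K) 0 0 0 \<tau> (y - ln K) s"
proof -
  have "d_x (d_sig (heat_sg \<tau> (call_payoff K))) y s = heat_kernel_comb 0 (s * \<tau> * K) 0 0 0 \<tau> (y - ln K) s"
    by (rule d_x_heat_kernel_comb) (simp add: d_sig_heat_sg_call_payoff[OF K \<tau> s] heat_kernel_comb_def)
  then show ?thesis
    unfolding L1_op_def d_sig_heat_sg_call_payoff[OF K \<tau> s]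
    by (simp add: heat_kernel_comb_def power2_eq_square power3_eq_cube algebra_simps)
qed

lemma L2_op_heat_sg_call_payoff:
  assumes K: "K > 0" and \<tau>: "\<tau> > 0" and \<sigma>: "\<sigma> > 0"
  shows "L2_op (heat_sg \<tau> (call_payoff K)) y \<sigma> =
           heat_kernel_comb (\<sigma>^2 * \<tau> * K / 2) (- (\<sigma>^4 * \<tau>^2 * K / 2)) (\<sigma>^4 * \<tau>^2 * K / 2) 0 0
             \<tau> (y - ln K) \<sigma>"
proof -
  have second_deriv: "d_sig (d_sig (heat_sg \<tau> (call_payoff K))) y \<sigma>
        = heat_kernel_comb (\<tau> * K) (0 - \<sigma> * \<tau> * K * \<sigma> * \<tau>) ((\<sigma> * \<tau> * K - 0) * \<sigma> * \<tau>) (0 * \<sigma> * \<tau>) 0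
            \<tau> (y - ln K) \<sigma>"
    by (rule d_sig_heat_kernel_comb[where fa="\<lambda>s. s * \<tau> * K" and fb="\<lambda>s. 0"])
       (use \<tau> \<sigma> d_sig_heat_sg_call_payoff[OF K \<tau>] in \<open>auto intro!: derivative_eq_intros\<close>)
  show ?thesis
    unfolding L2_op_def second_deriv
    by (simp add: heat_kernel_comb_def algebra_simps power2_eq_square power4_eq_xxxx)
qed

lemma F1_integrand:
  assumes K: "K > 0" and \<sigma>: "\<sigma> > 0" and \<tau>: "0 < \<tau>" "\<tau> < t"
  shows "heat_sg (t - \<tau>) (L1_op \<rho> \<kappa> \<theta> (heat_sg \<tau> (call_payoff K))) x \<sigma> =
           \<tau> * heat_kernel_comb (\<kappa> * (\<theta> - \<sigma>) * \<sigma> * K) (\<rho> * \<sigma>^3 * K) 0 0 0 t (x - ln K) \<sigma>"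
proof -
  have "heat_sg (t - \<tau>) (L1_op \<rho> \<kappa> \<theta> (heat_sg \<tau> (call_payoff K))) x \<sigma> =
          heat_kernel_comb (\<kappa> * (\<theta> - \<sigma>) * \<sigma> * \<tau> * K) (\<rho> * \<sigma>^3 * \<tau> * K) 0 0 0 ((t - \<tau>) + \<tau>) (x - ln K) \<sigma>"
    by (rule heat_sg_heat_kernel_comb) (use \<tau> \<sigma> L1_op_heat_sg_call_payoff[OF K \<tau>(1) \<sigma>] in auto)
  then show ?thesis
    by (simp add: heat_kernel_comb_def algebra_simps)
qed

lemma L2_integrand:
  assumes K: "K > 0" and \<sigma>: "\<sigma> > 0" and \<tau>: "0 < \<tau>" "\<tau> < t"
  shows "heat_sg (t - \<tau>) (L2_op (heat_sg \<tau> (call_payoff K))) x \<sigma> =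
           \<tau> * heat_kernel_comb (\<sigma>^2 * K / 2) 0 0 0 0 t (x - ln K) \<sigma>
           + \<tau>^2 * heat_kernel_comb 0 (- (\<sigma>^4 * K / 2)) (\<sigma>^4 * K / 2) 0 0 t (x - ln K) \<sigma>"
proof -
  have "heat_sg (t - \<tau>) (L2_op (heat_sg \<tau> (call_payoff K))) x \<sigma> =
          heat_kernel_comb (\<sigma>^2 * \<tau> * K / 2) (- (\<sigma>^4 * \<tau>^2 * K / 2)) (\<sigma>^4 * \<tau>^2 * K / 2) 0 0
            ((t - \<tau>) + \<tau>) (x - ln K) \<sigma>"
    by (rule heat_sg_heat_kernel_comb) (use \<tau> \<sigma> L2_op_heat_sg_call_payoff[OF K \<tau>(1) \<sigma>] in auto)
  then show ?thesis
    by (simp add: heat_kernel_comb_def algebra_simps)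
qed

lemma L1_L1_integrand:
  assumes K: "K > 0" and \<sigma>: "\<sigma> > 0" and \<tau>: "0 < \<tau>2" "\<tau>2 < \<tau>1" "\<tau>1 < t"
  shows "heat_sg (t - \<tau>1) (L1_op \<rho> \<kappa> \<theta> (heat_sg (\<tau>1 - \<tau>2)
             (L1_op \<rho> \<kappa> \<theta> (heat_sg \<tau>2 (call_payoff K))))) x \<sigma> =
           \<tau>2 * heat_kernel_comb (\<kappa>^2 * (\<theta> - \<sigma>) * (\<theta> - 2 * \<sigma>) * K) (\<kappa> * \<rho> * \<sigma>^2 * (4 * \<theta> - 5 * \<sigma>) * K)
                  (3 * \<rho>^2 * \<sigma>^4 * K) 0 0 t (x - ln K) \<sigma>
           + \<tau>1 * \<tau>2 * heat_kernel_comb 0 (- (\<kappa>^2 * (\<theta> - \<sigma>)^2 * \<sigma>^2 * K))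
                  (\<kappa>^2 * (\<theta> - \<sigma>)^2 * \<sigma>^2 * K - 2 * \<kappa> * \<rho> * (\<theta> - \<sigma>) * \<sigma>^4 * K)
                  (2 * \<kappa> * \<rho> * (\<theta> - \<sigma>) * \<sigma>^4 * K - \<rho>^2 * \<sigma>^6 * K) (\<rho>^2 * \<sigma>^6 * K) t (x - ln K) \<sigma>"
proof -
  define a where "a = ln K"
  define g where "g = heat_sg (\<tau>1 - \<tau>2) (L1_op \<rho> \<kappa> \<theta> (heat_sg \<tau>2 (call_payoff K)))"
  have \<tau>1: "\<tau>1 > 0" using \<tau> by simp
  have g: "g y s = (\<kappa> * (\<theta> - s) * s * \<tau>2 * K) * heat_kernel_deriv 0 \<tau>1 (y - a) s
                   + (\<rho> * s^3 * \<tau>2 * K) * heat_kernel_deriv 1 \<tau>1 (y - a) s" if "s > 0" for y s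
    using F1_integrand[OF K that \<tau>(1,2), of \<rho> \<kappa> \<theta> y]
    by (simp add: g_def a_def heat_kernel_comb_def algebra_simps)
  define e0 where "e0 = \<kappa> * (\<theta> - 2 * \<sigma>) * \<tau>2 * K"
  define e1 where "e1 = 3 * \<rho> * \<sigma>^2 * \<tau>2 * K - \<kappa> * (\<theta> - \<sigma>) * \<sigma> * \<tau>2 * K * \<sigma> * \<tau>1"
  define e2 where "e2 = (\<kappa> * (\<theta> - \<sigma>) * \<sigma> * \<tau>2 * K - \<rho> * \<sigma>^3 * \<tau>2 * K) * \<sigma> * \<tau>1"
  define e3 where "e3 = \<rho> * \<sigma>^3 * \<tau>2 * K * \<sigma> * \<tau>1"
  have d_sig_g: "d_sig g y \<sigma> = heat_kernel_comb e0 e1 e2 e3 0 \<tau>1 (y - a) \<sigma>" for y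
    unfolding e0_def e1_def e2_def e3_def
    by (rule d_sig_heat_kernel_comb[where fa="\<lambda>s. \<kappa> * (\<theta> - s) * s * \<tau>2 * K" and fb="\<lambda>s. \<rho> * s^3 * \<tau>2 * K"])
       (use \<tau>1 \<sigma> g in \<open>auto intro!: derivative_eq_intros simp: algebra_simps power2_eq_square power3_eq_cube\<close>)
  have "d_x (d_sig g) y \<sigma> = heat_kernel_comb 0 e0 e1 e2 e3 \<tau>1 (y - a) \<sigma>" for y
    by (rule d_x_heat_kernel_comb) (use d_sig_g in auto)
  then have "L1_op \<rho> \<kappa> \<theta> g y \<sigma> =
               heat_kernel_comb (\<kappa> * (\<theta> - \<sigma>) * e0) (\<rho> * \<sigma>^2 * e0 + \<kappa> * (\<theta> - \<sigma>) * e1)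
                 (\<rho> * \<sigma>^2 * e1 + \<kappa> * (\<theta> - \<sigma>) * e2) (\<rho> * \<sigma>^2 * e2 + \<kappa> * (\<theta> - \<sigma>) * e3)
                 (\<rho> * \<sigma>^2 * e3) \<tau>1 (y - a) \<sigma>" for y
    unfolding L1_op_def d_sig_g by (simp add: heat_kernel_comb_def algebra_simps)
  then have "heat_sg (t - \<tau>1) (L1_op \<rho> \<kappa> \<theta> g) x \<sigma> =
               heat_kernel_comb (\<kappa> * (\<theta> - \<sigma>) * e0) (\<rho> * \<sigma>^2 * e0 + \<kappa> * (\<theta> - \<sigma>) * e1)
                 (\<rho> * \<sigma>^2 * e1 + \<kappa> * (\<theta> - \<sigma>) * e2) (\<rho> * \<sigma>^2 * e2 + \<kappa> * (\<theta> - \<sigma>) * e3)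
                 (\<rho> * \<sigma>^2 * e3) ((t - \<tau>1) + \<tau>1) (x - a) \<sigma>"
    by (intro heat_sg_heat_kernel_comb) (use \<tau> \<sigma> in auto)
  moreover have "\<sigma>^6 = \<sigma> * \<sigma> * \<sigma> * \<sigma> * \<sigma> * \<sigma>"
    by (simp add: eval_nat_numeral)
  ultimately have "heat_sg (t - \<tau>1) (L1_op \<rho> \<kappa> \<theta> g) x \<sigma> =
           \<tau>2 * heat_kernel_comb (\<kappa>^2 * (\<theta> - \<sigma>) * (\<theta> - 2 * \<sigma>) * K) (\<kappa> * \<rho> * \<sigma>^2 * (4 * \<theta> - 5 * \<sigma>) * K)
                  (3 * \<rho>^2 * \<sigma>^4 * K) 0 0 t (x - ln K) \<sigma>
           + \<tau>1 * \<tau>2 * heat_kernel_comb 0 (- (\<kappa>^2 * (\<theta> - \<sigma>)^2 * \<sigma>^2 * K))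
                  (\<kappa>^2 * (\<theta> - \<sigma>)^2 * \<sigma>^2 * K - 2 * \<kappa> * \<rho> * (\<theta> - \<sigma>) * \<sigma>^4 * K)
                  (2 * \<kappa> * \<rho> * (\<theta> - \<sigma>) * \<sigma>^4 * K - \<rho>^2 * \<sigma>^6 * K) (\<rho>^2 * \<sigma>^6 * K) t (x - ln K) \<sigma>"
    unfolding a_def e0_def e1_def e2_def e3_def
    by (simp add: heat_kernel_comb_def algebra_simps power2_eq_square power3_eq_cube power4_eq_xxxx)
  then show ?thesis
    unfolding g_def .
qed

section \<open>Time integration\<close>

lemma integral_cubic:
  fixes T a b c d :: real
  assumes T: "T > 0" and f: "\<And>\<tau>. \<tau> \<in> {0<..<T} \<Longrightarrow> f \<tau> = a + b * \<tau> + c * \<tau>^2 + d * \<tau>^3"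
    and v: "v = a * T + b * T^2 / 2 + c * T^3 / 3 + d * T^4 / 4"
  shows "integral {0..T} f = v"
proof -
  define F where "F = (\<lambda>\<tau>::real. a * \<tau> + b * \<tau>^2 / 2 + c * \<tau>^3 / 3 + d * \<tau>^4 / 4)"
  have "((\<lambda>\<tau>. a + b * \<tau> + c * \<tau>^2 + d * \<tau>^3) has_integral (F T - F 0)) {0..T}"
  proof (rule fundamental_theorem_of_calculus)
    fix \<tau> :: real
    show "(F has_vector_derivative a + b * \<tau> + c * \<tau>^2 + d * \<tau>^3) (at \<tau> within {0..T})"
      unfolding F_def has_real_derivative_iff_has_vector_derivative[symmetric]
      by (auto intro!: derivative_eq_intros simp: numeral_eq_Suc field_simps)
  qed (use T in simp)
  moreover have "(f has_integral (F T - F 0)) {0..T} \<longleftrightarrow>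
                 ((\<lambda>\<tau>. a + b * \<tau> + c * \<tau>^2 + d * \<tau>^3) has_integral (F T - F 0)) {0..T}"
    by (rule has_integral_spike_finite_eq[of "{0, T}"]) (auto simp: f)
  ultimately have "(f has_integral (F T - F 0)) {0..T}"
    by simp
  then show ?thesis
    using v by (simp add: F_def integral_unique)
qed

lemma F1_eq_heat_kernel_comb:
  assumes K: "K > 0" and t: "t > 0" and \<sigma>: "\<sigma> > 0"
  shows "F1 K t \<rho> \<kappa> \<theta> x \<sigma> =
           t^2 / 2 * heat_kernel_comb (\<kappa> * (\<theta> - \<sigma>) * \<sigma> * K) (\<rho> * \<sigma>^3 * K) 0 0 0 t (x - ln K) \<sigma>"
  unfolding F1_def
  by (rule integral_cubic[OF t, where a=0 and c=0 and d=0 and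
        b="heat_kernel_comb (\<kappa> * (\<theta> - \<sigma>) * \<sigma> * K) (\<rho> * \<sigma>^3 * K) 0 0 0 t (x - ln K) \<sigma>"])
     (simp_all add: F1_integrand[OF K \<sigma>])

lemma F2_eq_heat_kernel_deriv:
  assumes K: "K > 0" and t: "t > 0" and \<sigma>: "\<sigma> > 0"
  shows "F2 K t \<rho> \<kappa> \<theta> x \<sigma> = K * (\<Sum>i\<le>4. a2 t \<rho> \<kappa> \<theta> \<sigma> i * heat_kernel_deriv i t (x - ln K) \<sigma>)"
proof -
  define P where "P i = heat_kernel_deriv i t (x - ln K) \<sigma>" for i
  have comb: "heat_kernel_comb c0 c1 c2 c3 c4 t (x - ln K) \<sigma> = c0 * P 0 + c1 * P 1 + c2 * P 2 + c3 * P 3 + c4 * P 4"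
    for c0 c1 c2 c3 c4 by (simp add: heat_kernel_comb_def P_def)
  define A where "A = \<kappa>^2 * (\<theta> - \<sigma>) * (\<theta> - 2 * \<sigma>) * K * P 0 + \<kappa> * \<rho> * \<sigma>^2 * (4 * \<theta> - 5 * \<sigma>) * K * P 1
                     + 3 * \<rho>^2 * \<sigma>^4 * K * P 2"
  define B where "B = - (\<kappa>^2 * (\<theta> - \<sigma>)^2 * \<sigma>^2 * K) * P 1
                     + (\<kappa>^2 * (\<theta> - \<sigma>)^2 * \<sigma>^2 * K - 2 * \<kappa> * \<rho> * (\<theta> - \<sigma>) * \<sigma>^4 * K) * P 2
                     + (2 * \<kappa> * \<rho> * (\<theta> - \<sigma>) * \<sigma>^4 * K - \<rho>^2 * \<sigma>^6 * K) * P 3 + \<rho>^2 * \<sigma>^6 * K * P 4"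
  have L2_part: "integral {0..t} (\<lambda>\<tau>1. heat_sg (t - \<tau>1) (L2_op (heat_sg \<tau>1 (call_payoff K))) x \<sigma>)
                 = t^2 / 4 * \<sigma>^2 * K * P 0 + t^3 / 6 * \<sigma>^4 * K * (P 2 - P 1)"
    by (rule integral_cubic[OF t, where a=0 and b="\<sigma>^2 * K / 2 * P 0"
          and c="\<sigma>^4 * K / 2 * (P 2 - P 1)" and d=0])
       (simp_all add: L2_integrand[OF K \<sigma>] comb field_simps)
  have inner: "integral {0..\<tau>1} (\<lambda>\<tau>2. heat_sg (t - \<tau>1) (L1_op \<rho> \<kappa> \<theta> (heat_sg (\<tau>1 - \<tau>2)
                 (L1_op \<rho> \<kappa> \<theta> (heat_sg \<tau>2 (call_payoff K))))) x \<sigma>) = \<tau>1^2 / 2 * A + \<tau>1^3 / 2 * B"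
    if "\<tau>1 \<in> {0<..<t}" for \<tau>1
    by (rule integral_cubic[where a=0 and b="A + \<tau>1 * B" and c=0 and d=0])
       (use that in \<open>auto simp: L1_L1_integrand[OF K \<sigma>] comb A_def B_def
          algebra_simps power2_eq_square power3_eq_cube\<close>)
  have L1_L1_part: "integral {0..t} (\<lambda>\<tau>1. integral {0..\<tau>1} (\<lambda>\<tau>2. heat_sg (t - \<tau>1) (L1_op \<rho> \<kappa> \<theta>
                      (heat_sg (\<tau>1 - \<tau>2) (L1_op \<rho> \<kappa> \<theta> (heat_sg \<tau>2 (call_payoff K))))) x \<sigma>))
                    = t^3 / 6 * A + t^4 / 8 * B"
    by (rule integral_cubic[OF t, where a=0 and b=0 and c="A / 2" and d="B / 2"])
       (simp_all add: inner algebra_simps)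
  show ?thesis
    unfolding F2_def L2_part L1_L1_part P_def[symmetric] A_def B_def
    by (simp add: a2_def eval_nat_numeral field_simps)
qed

lemma heat_kernel_deriv_eq_hermite:
  "heat_kernel_deriv k \<tau> z s = (-1 / (s * sqrt \<tau>))^k * hermite k (z / (s * sqrt \<tau>) - s * sqrt \<tau> / 2)
                                * Nprime (z / (s * sqrt \<tau>) - s * sqrt \<tau> / 2) / (s * sqrt \<tau>)"
  by (simp add: heat_kernel_deriv_def hermite_gauss_def hermite_eq_hermite_poly)

theorem mainTheorem3:
  fixes K t \<rho> \<kappa>0 \<theta> x \<sigma> :: real
  assumes "K > 0" and "t > 0" and "\<sigma> > 0"
  shows "F1 K t \<rho> \<kappa>0 \<theta> x \<sigma> =
           K * t / 2 * (\<kappa>0 * (\<theta> - \<sigma>) * sqrt t - \<rho> * \<sigma> * d_minus K t x \<sigma>)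
             * Nprime (d_minus K t x \<sigma>)
       \<and> F2 K t \<rho> \<kappa>0 \<theta> x \<sigma> =
           K * (\<Sum>i\<le>4. a2 t \<rho> \<kappa>0 \<theta> \<sigma> i * (- 1 / (\<sigma> * sqrt t))^i
                  * hermite i (d_minus K t x \<sigma>) * Nprime (d_minus K t x \<sigma>) / (\<sigma> * sqrt t))"
proof
  let ?q = "\<sigma> * sqrt t" and ?d = "d_minus K t x \<sigma>"
  have kernel: "heat_kernel_deriv k t (x - ln K) \<sigma> = (-1 / ?q)^k * hermite k ?d * Nprime ?d / ?q" for k
    unfolding heat_kernel_deriv_eq_hermite d_minus_def ..
  have "t^2 / 2 * (\<kappa>0 * (\<theta> - \<sigma>) * \<sigma> * K * (n / ?q) + \<rho> * \<sigma>^3 * K * (-1 / ?q * d * n / ?q))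
          = K * t / 2 * (\<kappa>0 * (\<theta> - \<sigma>) * sqrt t - \<rho> * \<sigma> * d) * n" for d n
  proof -
    obtain r where "r > 0" "t = r * r"
      using assms(2) by (intro that[of "sqrt t"]) auto
    then show ?thesis
      using assms(3) by (simp add: field_simps power2_eq_square power3_eq_cube)
  qed
  then show "F1 K t \<rho> \<kappa>0 \<theta> x \<sigma> = K * t / 2 * (\<kappa>0 * (\<theta> - \<sigma>) * sqrt t - \<rho> * \<sigma> * ?d) * Nprime ?d"
    unfolding F1_eq_heat_kernel_comb[OF assms] heat_kernel_comb_def kernel
    by (simp add: hermite_eq_hermite_poly)
  show "F2 K t \<rho> \<kappa>0 \<theta> x \<sigma> =
          K * (\<Sum>i\<le>4. a2 t \<rho> \<kappa>0 \<theta> \<sigma> i * (-1 / ?q)^i * hermite i ?d * Nprime ?d / ?q)"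
    unfolding F2_eq_heat_kernel_deriv[OF assms] kernel by (simp add: mult.assoc)
qed

end
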